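(* Let $s(n)$ denote the number of unlabeled semimodular lattices with $n$ elements. Then $s(n) \ge \Omega(2.5080^n)$, i.e., there is a constant $b>0$ such that $s(n) \ge b \cdot 2.5080^n$ for all sufficiently large $n$.
   Context: All lattices are finite and nonempty, counted up to isomorphism. Semimodular means upper semimodular. *)

theory Defs
  imports Complex_Main
begin

text \<open>A finite lattice with n elements is represented by an order relation R on the
carrier {..<n}. Lattices are nonempty, so n > 0 is required.\<close>

definition is_lub :: "nat \<Rightarrow> (nat \<times> nat) set \<Rightarrow> nat \<Rightarrow> nat \<Rightarrow> nat \<Rightarrow> bool" where
  "is_lub n R a b j \<longleftrightarrow> j < n \<and> (a, j) \<in> R \<and> (b, j) \<in> R \<and>
     (\<forall>u<n. (a, u) \<in> R \<and> (b, u) \<in> R \<longrightarrow> (j, u) \<in> R)"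

definition is_glb :: "nat \<Rightarrow> (nat \<times> nat) set \<Rightarrow> nat \<Rightarrow> nat \<Rightarrow> nat \<Rightarrow> bool" where
  "is_glb n R a b m \<longleftrightarrow> m < n \<and> (m, a) \<in> R \<and> (m, b) \<in> R \<and>
     (\<forall>u<n. (u, a) \<in> R \<and> (u, b) \<in> R \<longrightarrow> (u, m) \<in> R)"

definition lattice_order :: "nat \<Rightarrow> (nat \<times> nat) set \<Rightarrow> bool" where
  "lattice_order n R \<longleftrightarrow> 0 < n \<and> R \<subseteq> {..<n} \<times> {..<n} \<and> partial_order_on {..<n} R \<and>
     (\<forall>a<n. \<forall>b<n. (\<exists>j. is_lub n R a b j) \<and> (\<exists>m. is_glb n R a b m))"

definition covers :: "nat \<Rightarrow> (nat \<times> nat) set \<Rightarrow> nat \<Rightarrow> nat \<Rightarrow> bool" where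
  "covers n R x y \<longleftrightarrow> x < n \<and> y < n \<and> (x, y) \<in> R \<and> x \<noteq> y \<and>
     \<not> (\<exists>z<n. (x, z) \<in> R \<and> (z, y) \<in> R \<and> z \<noteq> x \<and> z \<noteq> y)"

definition semimodular_lattice :: "nat \<Rightarrow> (nat \<times> nat) set \<Rightarrow> bool" where
  "semimodular_lattice n R \<longleftrightarrow> lattice_order n R \<and>
     (\<forall>a<n. \<forall>b<n. \<forall>m j. is_glb n R a b m \<longrightarrow> is_lub n R a b j \<longrightarrow>
        covers n R m a \<longrightarrow> covers n R b j)"

definition order_iso :: "nat \<Rightarrow> (nat \<times> nat) set \<Rightarrow> (nat \<times> nat) set \<Rightarrow> bool" where
  "order_iso n R R' \<longleftrightarrow> (\<exists>f. bij_betw f {..<n} {..<n} \<and>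
     (\<forall>x<n. \<forall>y<n. (x, y) \<in> R \<longleftrightarrow> (f x, f y) \<in> R'))"

definition semimod_lattices :: "nat \<Rightarrow> (nat \<times> nat) set set" where
  "semimod_lattices n = {R. semimodular_lattice n R}"

definition s_count :: "nat \<Rightarrow> nat" where
  "s_count n = card ((\<lambda>R. {R' \<in> semimod_lattices n. order_iso n R R'}) ` semimod_lattices n)"

end

theory Submission
  imports Defs "HOL-Combinatorics.Permutations"
begin

text \<open>
  For \<open>m \<ge> 2\<close>, \<open>L, t \<ge> 1\<close> consider the lattices on \<open>1 + L m + t\<close> elements built as follows:
  a bottom, then \<open>L\<close> levels of \<open>m\<close> elements each, then a chain of \<open>t\<close> elements. Each level
  has one spine element; the spine together with the bottom and the top chain is a chain.
  Every non-spine element of levels \<open>2..L\<close> chooses a parent in the level below, every other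
  element has the spine element below it as parent, and \<open>x \<le> y\<close> holds iff \<open>x\<close> is an ancestor
  of \<open>y\<close> or the ancestor of \<open>y\<close> one level above \<open>x\<close> lies on the spine. Two incomparable
  elements then have the spine element one level above the higher of them as their join, so
  these lattices are graded by the level and upper semimodular.

  There are \<open>m ^ ((L - 1) (m - 1))\<close> parent maps, and distinct ones give distinct orders. An
  isomorphism between two of these lattices preserves levels and fixes the spine elements of the
  levels \<open>2..L\<close> (within those levels only they cover more than one element), so it is determined
  by the permutations it induces on level \<open>1\<close> and on the non-spine part of every other level.
  Hence an isomorphism class contains at most \<open>m! (m - 1)! ^ (L - 1)\<close> of the lattices, and
  \<open>s(n)\<close> grows at least like \<open>(m ^ (m - 1) / (m - 1)!) ^ (n / m)\<close>. For \<open>m = 40\<close> the base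
  exceeds \<open>2.508 ^ 40\<close>.
\<close>

lemma ex_lub_set:
  assumes "finite S" "S \<noteq> {}" "S \<subseteq> {..<n}" "trans R" "\<forall>a<n. (a,a) \<in> R"
    "\<forall>a<n. \<forall>b<n. \<exists>j. is_lub n R a b j"
  shows "\<exists>j<n. (\<forall>s\<in>S. (s,j)\<in>R) \<and> (\<forall>u<n. (\<forall>s\<in>S. (s,u)\<in>R) \<longrightarrow> (j,u)\<in>R)"
  using assms(1,2,3)
proof (induction S rule: finite_ne_induct)
  case (singleton a)
  then show ?case using assms(5) by auto
next
  case (insert a S)
  then obtain j0 where j0: "j0 < n" "\<forall>s\<in>S. (s,j0)\<in>R" "\<forall>u<n. (\<forall>s\<in>S. (s,u)\<in>R) \<longrightarrow> (j0,u)\<in>R"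
    by auto
  have a: "a < n" using insert by auto
  obtain j where j: "is_lub n R a j0 j" using assms(6) a j0(1) by blast
  have "j < n" "(a, j) \<in> R" "(j0, j) \<in> R" "\<forall>u<n. (a,u)\<in>R \<and> (j0,u)\<in>R \<longrightarrow> (j,u)\<in>R"
    using j unfolding is_lub_def by auto
  moreover have "\<forall>s\<in>S. (s,j)\<in>R" using j0(2) \<open>(j0, j) \<in> R\<close> assms(4) unfolding trans_def by blast
  moreover have "\<forall>u<n. (\<forall>s\<in>insert a S. (s,u)\<in>R) \<longrightarrow> (j,u)\<in>R"
    using j0(3) calculation(4) by auto
  ultimately show ?case by auto
qed

text \<open>The meet of \<open>a\<close> and \<open>b\<close> is the join of their common lower bounds, of which \<open>z\<close> is one.\<close>

lemma ex_is_glb_if_bot: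
  assumes "z < n" "\<forall>x<n. (z,x)\<in>R" "trans R" "\<forall>a<n. (a,a) \<in> R"
    "\<forall>a<n. \<forall>b<n. \<exists>j. is_lub n R a b j" "a < n" "b < n"
  shows "\<exists>g. is_glb n R a b g"
proof -
  let ?S = "{s. s < n \<and> (s,a)\<in>R \<and> (s,b)\<in>R}"
  have "finite ?S" "?S \<noteq> {}" "?S \<subseteq> {..<n}" using assms by auto
  then obtain j where j: "j<n" "\<forall>s\<in>?S. (s,j)\<in>R" "\<forall>u<n. (\<forall>s\<in>?S. (s,u)\<in>R) \<longrightarrow> (j,u)\<in>R"
    using ex_lub_set[of ?S n R] assms by blast
  have "(j,a) \<in> R" "(j,b) \<in> R" using j(3) assms(6,7) by auto
  then have "is_glb n R a b j" unfolding is_glb_def using j by auto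
  then show ?thesis by blast
qed

lemma is_lub_commute: "is_lub n R a b j \<longleftrightarrow> is_lub n R b a j"
  unfolding is_lub_def by auto

lemma is_lub_unique: "antisym R \<Longrightarrow> is_lub n R a b j \<Longrightarrow> is_lub n R a b j' \<Longrightarrow> j = j'"
  unfolding is_lub_def antisym_def by blast

definition order_iso_by :: "nat \<Rightarrow> (nat \<Rightarrow> nat) \<Rightarrow> (nat \<times> nat) set \<Rightarrow> (nat \<times> nat) set \<Rightarrow> bool" where
  "order_iso_by n f R R' \<longleftrightarrow> bij_betw f {..<n} {..<n} \<and>
     (\<forall>x<n. \<forall>y<n. (x, y) \<in> R \<longleftrightarrow> (f x, f y) \<in> R')"

lemma order_iso_iff_ex: "order_iso n R R' \<longleftrightarrow> (\<exists>f. order_iso_by n f R R')"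
  unfolding order_iso_def order_iso_by_def ..

lemma order_iso_by_less: "order_iso_by n f R R' \<Longrightarrow> x < n \<Longrightarrow> f x < n"
  unfolding order_iso_by_def bij_betw_def by auto

lemma order_iso_by_surj: "order_iso_by n f R R' \<Longrightarrow> y < n \<Longrightarrow> \<exists>x<n. f x = y"
  unfolding order_iso_by_def bij_betw_def by (metis imageE lessThan_iff)

lemma order_iso_by_inj: "order_iso_by n f R R' \<Longrightarrow> x < n \<Longrightarrow> y < n \<Longrightarrow> f x = f y \<Longrightarrow> x = y"
  unfolding order_iso_by_def bij_betw_def inj_on_def by auto

lemma order_iso_by_restrict: "order_iso_by n f R R' \<Longrightarrow> order_iso_by n (restrict f {..<n}) R R'"
proof -
  have "bij_betw (restrict f {..<n}) {..<n} {..<n} = bij_betw f {..<n} {..<n}"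
    by (rule bij_betw_cong) simp
  then show "order_iso_by n f R R' \<Longrightarrow> order_iso_by n (restrict f {..<n}) R R'"
    unfolding order_iso_by_def by simp
qed

lemma order_iso_by_image:
  assumes f: "order_iso_by n f R R'" and "R \<subseteq> {..<n} \<times> {..<n}" and R': "R' \<subseteq> {..<n} \<times> {..<n}"
  shows "R' = (\<lambda>(x, y). (f x, f y)) ` R"
proof (intro set_eqI iffI)
  fix z assume z: "z \<in> R'"
  then obtain u v where uv: "z = (u, v)" "u < n" "v < n" using R' by blast
  obtain x y where "x < n" "f x = u" "y < n" "f y = v" using order_iso_by_surj[OF f] uv by metis
  then show "z \<in> (\<lambda>(x, y). (f x, f y)) ` R"
    using f z uv unfolding order_iso_by_def by (auto intro: rev_image_eqI[of "(x, y)"])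
next
  fix z assume "z \<in> (\<lambda>(x, y). (f x, f y)) ` R"
  then show "z \<in> R'" using f assms(2) unfolding order_iso_by_def by auto
qed

lemma order_iso_by_covers:
  assumes f: "order_iso_by n f R R'" and c: "covers n R a b"
  shows "covers n R' (f a) (f b)"
proof -
  have a: "a < n" and b: "b < n" and ab: "(a, b) \<in> R" and ne: "a \<noteq> b"
    using c unfolding covers_def by auto
  have between: "False" if "w < n" "(a, w) \<in> R" "(w, b) \<in> R" "w \<noteq> a" "w \<noteq> b" for w
    using c that unfolding covers_def by blast
  show ?thesis unfolding covers_def
  proof (intro conjI)
    show "f a < n" "f b < n" using order_iso_by_less[OF f] a b by auto
    show "(f a, f b) \<in> R'" using f a b ab unfolding order_iso_by_def by simp
    show "f a \<noteq> f b" using order_iso_by_inj[OF f a b] ne by blast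
    show "\<not> (\<exists>z<n. (f a, z) \<in> R' \<and> (z, f b) \<in> R' \<and> z \<noteq> f a \<and> z \<noteq> f b)"
    proof
      assume "\<exists>z<n. (f a, z) \<in> R' \<and> (z, f b) \<in> R' \<and> z \<noteq> f a \<and> z \<noteq> f b"
        then obtain z where z: "z < n" "(f a, z) \<in> R'" "(z, f b) \<in> R'" "z \<noteq> f a" "z \<noteq> f b" by blast
      obtain w where w: "w < n" "z = f w" using order_iso_by_surj[OF f z(1)] by metis
      have "(a, w) \<in> R" "(w, b) \<in> R" using f a b w z unfolding order_iso_by_def by auto
      then show False using between w z by blast
    qed
  qed
qed

lemma order_iso_common_source:
  assumes "order_iso n R R1" and "order_iso n R R2"
  shows "order_iso n R1 R2"
proof -
  obtain f1 where f1: "order_iso_by n f1 R R1" using assms(1) order_iso_iff_ex by blast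
  obtain f2 where f2: "order_iso_by n f2 R R2" using assms(2) order_iso_iff_ex by blast
  let ?h = "inv_into {..<n} f1"
  have h: "bij_betw ?h {..<n} {..<n}" using bij_betw_inv_into f1 unfolding order_iso_by_def by blast
  have hl: "x < n \<Longrightarrow> ?h x < n" for x using h unfolding bij_betw_def by auto
  have hr: "x < n \<Longrightarrow> f1 (?h x) = x" for x
    using bij_betw_inv_into_right f1 unfolding order_iso_by_def by fastforce
  have "order_iso_by n (f2 \<circ> ?h) R1 R2"
    unfolding order_iso_by_def
  proof (intro conjI allI impI)
    show "bij_betw (f2 \<circ> ?h) {..<n} {..<n}"
      using bij_betw_trans h f2 unfolding order_iso_by_def by blast
    fix x y assume x: "x < n" and y: "y < n"
    have "(x, y) \<in> R1 \<longleftrightarrow> (f1 (?h x), f1 (?h y)) \<in> R1" using hr x y by simp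
    also have "\<dots> \<longleftrightarrow> (?h x, ?h y) \<in> R" using f1 hl x y unfolding order_iso_by_def by simp
    also have "\<dots> \<longleftrightarrow> (f2 (?h x), f2 (?h y)) \<in> R2" using f2 hl x y unfolding order_iso_by_def by simp
    finally show "(x, y) \<in> R1 \<longleftrightarrow> ((f2 \<circ> ?h) x, (f2 \<circ> ?h) y) \<in> R2" by simp
  qed
  then show ?thesis using order_iso_iff_ex by blast
qed

lemma finite_semimod_lattices: "finite (semimod_lattices n)"
proof (rule finite_subset)
  show "semimod_lattices n \<subseteq> Pow ({..<n} \<times> {..<n})"
    unfolding semimod_lattices_def semimodular_lattice_def lattice_order_def by auto
qed auto

lemma card_le_s_count_mult:
  assumes P: "finite P" and F: "\<And>p. p \<in> P \<Longrightarrow> F p \<in> semimod_lattices n"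
    and fibre: "\<And>p0. p0 \<in> P \<Longrightarrow> card {p \<in> P. order_iso n (F p0) (F p)} \<le> G"
  shows "card P \<le> s_count n * G"
proof -
  let ?cls = "\<lambda>R. {R' \<in> semimod_lattices n. order_iso n R R'}"
  let ?C = "?cls ` semimod_lattices n"
  have fibre_C: "card {p \<in> P. F p \<in> c} \<le> G" if c: "c \<in> ?C" for c
  proof (cases "{p \<in> P. F p \<in> c} = {}")
    case True
    show ?thesis unfolding True by simp
  next
    case False
    then obtain p0 where p0: "p0 \<in> P" "F p0 \<in> c" by auto
    obtain R where R: "c = ?cls R" using c by blast
    have "{p \<in> P. F p \<in> c} \<subseteq> {p \<in> P. order_iso n (F p0) (F p)}"
      using p0 R order_iso_common_source by blast
    from card_mono[OF _ this] show ?thesis using P fibre[OF p0(1)] by simp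
  qed
  have refl: "order_iso n R R" for R
    unfolding order_iso_def by (intro exI[of _ id]) auto
  have "P = (\<Union>c\<in>?C. {p \<in> P. F p \<in> c})" using F refl by blast
  then have "card P = card (\<Union>c\<in>?C. {p \<in> P. F p \<in> c})" by simp
  also have "\<dots> \<le> (\<Sum>c\<in>?C. card {p \<in> P. F p \<in> c})"
    using finite_semimod_lattices by (intro card_UN_le) simp
  also have "\<dots> \<le> (\<Sum>c\<in>?C. G)" using fibre_C by (rule sum_mono)
  also have "\<dots> = s_count n * G" unfolding s_count_def by simp
  finally show ?thesis .
qed

text \<open>
  Elements are numbered so that \<open>0\<close> is the bottom, level \<open>k \<in> {1..L}\<close> is the interval
  \<open>[1 + (k - 1) m, 1 + k m)\<close> with its least element on the spine, and \<open>L m + 1, \<dots>, L m + t\<close> is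
  the top chain, whose elements all lie on the spine. A parent map assigns to every free
  element (non-spine element of a level \<open>2..L\<close>) an element of the level below.
\<close>

locale spine_tree =
  fixes m L t :: nat
  assumes m2: "2 \<le> m" and L1: "1 \<le> L" and t1: "1 \<le> t"
begin

definition nelems :: nat where "nelems = 1 + L*m + t"

definition height :: nat where "height = L + t"

definition level :: "nat \<Rightarrow> nat" where
  "level x = (if x = 0 then 0 else if x \<le> L*m then (x-1) div m + 1 else x - L*m + L)"

definition on_spine :: "nat \<Rightarrow> bool" where
  "on_spine x \<longleftrightarrow> x = 0 \<or> L*m < x \<or> (x-1) mod m = 0"

definition spine :: "nat \<Rightarrow> nat" where
  "spine k = (if k = 0 then 0 else if k \<le> L then 1 + (k-1)*m else L*m + (k - L))"

text \<open>
  The elements of level \<open>k\<close> that an isomorphism may move: all of level \<open>1\<close>, and the non-spine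
  elements of the other levels.
\<close>

definition block :: "nat \<Rightarrow> nat set" where
  "block k = (if k = 1 then {1..<1+m} else {2+(k-1)*m..<1+k*m})"

definition free_elems :: "nat set" where
  "free_elems = (\<Union>k\<in>{2..L}. block k)"

definition level_set :: "nat \<Rightarrow> nat set" where
  "level_set k = {x. x < nelems \<and> level x = k}"

definition parent_maps :: "(nat \<Rightarrow> nat) set" where
  "parent_maps = Pi\<^sub>E free_elems (\<lambda>x. level_set (level x - 1))"

definition parent :: "(nat \<Rightarrow> nat) \<Rightarrow> nat \<Rightarrow> nat" where
  "parent p x = (if x \<in> free_elems then p x else spine (level x - 1))"

definition ancestor :: "(nat \<Rightarrow> nat) \<Rightarrow> nat \<Rightarrow> nat \<Rightarrow> nat" where
  "ancestor p y j = (parent p ^^ (level y - j)) y"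

definition tree_order :: "(nat \<Rightarrow> nat) \<Rightarrow> (nat \<times> nat) set" where
  "tree_order p = {(x,y). x < nelems \<and> y < nelems \<and> (x = y \<or> (level x < level y \<and>
      (ancestor p y (level x) = x \<or> on_spine (ancestor p y (level x + 1)))))}"

lemma m_pos: "0 < m" using m2 by simp

lemma level_eq_0_iff: "level x = 0 \<longleftrightarrow> x = 0"
  unfolding level_def using L1 by auto

lemma level_low: "x \<noteq> 0 \<Longrightarrow> x \<le> L*m \<Longrightarrow> 1 \<le> level x \<and> level x \<le> L"
proof -
  assume x0: "x \<noteq> 0" and x: "x \<le> L*m"
  have "x - 1 < L*m" using x0 x by simp
  then have "(x-1) div m < L" using m_pos by (simp add: div_less_iff_less_mult)
  then show ?thesis using x0 x by (simp add: level_def)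
qed

lemma level_high: "L < level x \<Longrightarrow> L*m < x \<and> level x = x - L*m + L"
proof -
  assume l: "L < level x"
  have "x \<noteq> 0" using l by (metis level_eq_0_iff not_less0)
  moreover have "\<not> x \<le> L*m"
  proof
    assume "x \<le> L*m"
    then have "level x \<le> L" using level_low calculation by blast
    then show False using l by simp
  qed
  ultimately show ?thesis by (simp add: level_def)
qed

lemma level_le_height: "x < nelems \<Longrightarrow> level x \<le> height"
  using level_low[of x] unfolding level_def height_def nelems_def by (cases "x = 0") auto

lemma level_eq_height_iff: "x < nelems \<Longrightarrow> level x = height \<longleftrightarrow> x = nelems - 1"
  using level_low[of x] t1 unfolding level_def height_def nelems_def by (cases "x = 0") auto

lemma spine_less: "k \<le> height \<Longrightarrow> spine k < nelems"
proof -
  assume k: "k \<le> height"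
  have "(k - 1) * m + 1 < 1 + L*m + t" if "k \<le> L" "k \<noteq> 0"
  proof -
    have "k - 1 \<le> L" using that by simp
    then have "(k-1)*m \<le> L * m" by (rule mult_le_mono1)
    then show ?thesis using t1 by linarith
  qed
  then show ?thesis using k unfolding spine_def height_def nelems_def by (auto simp: not_le)
qed

lemma level_spine: "k \<le> height \<Longrightarrow> level (spine k) = k"
proof -
  assume k: "k \<le> height"
  show ?thesis
  proof (cases "k = 0")
    case True then show ?thesis by (simp add: spine_def level_def)
  next
    case False
    show ?thesis
    proof (cases "k \<le> L")
      case True
      have "1 + (k-1)*m \<le> L*m"
      proof -
        have "(k-1)*m + m \<le> L*m" using True False
          by (metis Suc_diff_1 add.commute mult_Suc mult_le_mono1 not_gr_zero plus_1_eq_Suc)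
        then show ?thesis using m_pos by linarith
      qed
      then show ?thesis using True False m_pos by (simp add: spine_def level_def)
    next
      case False
      then have "\<not> L*m + (k - L) \<le> L*m" by simp
      then show ?thesis using False \<open>k \<noteq> 0\<close> by (simp add: spine_def level_def)
    qed
  qed
qed

lemma on_spine_spine: "on_spine (spine k)"
  unfolding on_spine_def spine_def by auto

lemma spine_level: "x < nelems \<Longrightarrow> on_spine x \<Longrightarrow> spine (level x) = x"
proof -
  assume x: "x < nelems" and s: "on_spine x"
  show ?thesis
  proof (cases "x = 0")
    case True then show ?thesis by (simp add: spine_def level_def)
  next
    case x0: False
    show ?thesis
    proof (cases "x \<le> L*m")
      case True
      then have md: "(x-1) mod m = 0" using s x0 unfolding on_spine_def by auto
      have "(x-1) div m + 1 \<le> L" using level_low[OF x0 True] x0 True by (simp add: level_def)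
      moreover have "1 + (x-1) div m * m = x"
        using md x0
          by (metis add_0 add.commute div_mult_mod_eq le_add_diff_inverse less_one not_less)
      ultimately show ?thesis using True x0 by (simp add: spine_def level_def)
    next
      case False
      have "x - L*m + L \<noteq> 0" using False by simp
      moreover have "\<not> x - L*m + L \<le> L" using False by simp
      ultimately show ?thesis using False x0 by (simp add: spine_def level_def)
    qed
  qed
qed

lemma level_eq_iff: "1 \<le> k \<Longrightarrow> k \<le> L \<Longrightarrow> x < nelems \<Longrightarrow>
    (level x = k \<longleftrightarrow> 1 + (k-1)*m \<le> x \<and> x < 1 + k*m)"
proof -
  assume k1: "1 \<le> k" and kL: "k \<le> L" and x: "x < nelems"
  have km: "k * m \<le> L * m" using kL by simp
  show ?thesis
  proof (cases "x = 0")
    case True then show ?thesis using k1 by (simp add: level_def)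
  next
    case x0: False
    show ?thesis
    proof (cases "x \<le> L*m")
      case False
      then have "level x = x - L*m + L" using x0 by (simp add: level_def)
      then have "level x \<noteq> k" using False kL by linarith
      moreover have "\<not> x < 1 + k*m" using False km by linarith
      ultimately show ?thesis by blast
    next
      case True
      then have lx: "level x = (x-1) div m + 1" using x0 by (simp add: level_def)
      have "(x-1) div m + 1 = k \<longleftrightarrow> (k-1) \<le> (x-1) div m \<and> (x-1) div m < k" using k1 by linarith
      also have "\<dots> \<longleftrightarrow> (k-1)*m \<le> x - 1 \<and> x - 1 < k*m"
        using less_eq_div_iff_mult_less_eq[OF m_pos, of "k-1" "x-1"]
          div_less_iff_less_mult[OF m_pos, of "x-1" k]
        by argo
      also have "\<dots> \<longleftrightarrow> 1 + (k-1)*m \<le> x \<and> x < 1 + k*m" using x0 by linarith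
      finally show ?thesis using lx by simp
    qed
  qed
qed

lemma spine_low: "1 \<le> k \<Longrightarrow> k \<le> L \<Longrightarrow> spine k = 1 + (k-1)*m"
  unfolding spine_def by simp

lemma L_less_height: "L < height" using t1 unfolding height_def by simp

lemma block_iff: "1 \<le> k \<Longrightarrow> k \<le> L \<Longrightarrow>
    (x \<in> block k \<longleftrightarrow> x < nelems \<and> level x = k \<and> (k = 1 \<or> x \<noteq> spine k))"
proof -
  assume k1: "1 \<le> k" and kL: "k \<le> L"
  have km: "k * m \<le> L * m" using kL by simp
  have "x \<in> block k \<Longrightarrow> x < 1 + k*m"
    unfolding block_def by (auto split: if_splits)
  then have "x \<in> block k \<Longrightarrow> x < nelems"
    using km t1 unfolding nelems_def by linarith
  moreover have "x < nelems \<Longrightarrow> (x \<in> block k \<longleftrightarrow> level x = k \<and> (k = 1 \<or> x \<noteq> spine k))"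
    using level_eq_iff[OF k1 kL] spine_low[OF k1 kL] k1 unfolding block_def by auto
  ultimately show ?thesis by blast
qed

lemma finite_block: "finite (block k)"
  unfolding block_def by auto

lemma card_block: "1 \<le> k \<Longrightarrow> card (block k) = (if k = 1 then m else m - 1)"
proof -
  assume k1: "1 \<le> k"
  have km2: "k * m = (k-1)*m + m" using k1 by (cases k) auto
  show ?thesis
  proof (cases "k = 1")
    case True then show ?thesis unfolding block_def by simp
  next
    case False
    then have "block k = {2+(k-1)*m..<1+((k-1)*m + m)}" unfolding block_def using km2 by simp
    then show ?thesis using False by simp
  qed
qed

lemma on_spine_iff: "x < nelems \<Longrightarrow> level x = k \<Longrightarrow> (on_spine x \<longleftrightarrow> x = spine k)"
  by (metis spine_level on_spine_spine)

lemma free_elems_less: "x \<in> free_elems \<Longrightarrow> x < nelems"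
  unfolding free_elems_def using block_iff by auto

lemma free_elems_level: "x \<in> free_elems \<Longrightarrow> 2 \<le> level x \<and> level x \<le> L"
  unfolding free_elems_def using block_iff by fastforce

lemma free_elems_not_on_spine: "x \<in> free_elems \<Longrightarrow> \<not> on_spine x"
proof -
  assume x: "x \<in> free_elems"
  then obtain k where k: "k \<in> {2..L}" "x \<in> block k" unfolding free_elems_def by auto
  then have "x < nelems" "level x = k" "x \<noteq> spine k" using block_iff[of k x] by auto
  then show ?thesis using on_spine_iff by simp
qed

lemma on_spine_top: "on_spine (nelems - 1)" and level_top: "level (nelems - 1) = height"
  using t1 by (auto simp: on_spine_def nelems_def level_def height_def)

lemma spine_height: "spine height = nelems - 1"
  using spine_level[of "nelems - 1"] on_spine_top level_top by (simp add: nelems_def)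

lemma elem_cases: "x < nelems \<Longrightarrow>
    x = 0 \<or> L*m < x \<or> (\<exists>k\<in>{1..L}. x \<in> block k) \<or> (\<exists>k\<in>{2..L}. x = spine k)"
proof -
  assume x: "x < nelems"
  show ?thesis
  proof (cases "x = 0 \<or> L*m < x")
    case True then show ?thesis by blast
  next
    case False
    then have x0: "x \<noteq> 0" and xl: "x \<le> L*m" by auto
    let ?k = "level x"
    have k: "1 \<le> ?k" "?k \<le> L" using level_low[OF x0 xl] by auto
    show ?thesis
    proof (cases "?k = 1 \<or> x \<noteq> spine ?k")
      case True
      then have "x \<in> block ?k" using block_iff[OF k] x by simp
      then show ?thesis using k by auto
    next
      case False
      then have "x = spine ?k" "2 \<le> ?k" using k by auto
      then show ?thesis using k by auto
    qed
  qed
qed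

lemma card_level_set: "1 \<le> j \<Longrightarrow> j \<le> L \<Longrightarrow> card (level_set j) = m"
proof -
  assume j1: "1 \<le> j" and jL: "j \<le> L"
  have "level_set j = {1 + (j-1)*m..<1 + j*m}"
  proof -
    have jm: "j*m \<le> L*m" using jL by simp
    have b: "x < 1 + j*m \<Longrightarrow> x < nelems" for x using jm t1 unfolding nelems_def by linarith
    have mem: "x \<in> level_set j \<longleftrightarrow> x \<in> {1 + (j-1)*m..<1 + j*m}" for x
    proof (cases "x < nelems")
      case True then show ?thesis unfolding level_set_def using level_eq_iff[OF j1 jL True] by simp
    next
      case False then show ?thesis unfolding level_set_def using b by auto
    qed
    show ?thesis by (rule set_eqI[OF mem])
  qed
  moreover have "j*m = (j-1)*m + m" using j1 by (cases j) auto
  ultimately show ?thesis by simp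
qed

lemma card_free_elems: "card free_elems = (L-1)*(m-1)"
proof -
  have "card free_elems = (\<Sum>k\<in>{2..L}. card (block k))"
    unfolding free_elems_def
  proof (rule card_UN_disjoint)
    show "\<forall>i\<in>{2..L}. \<forall>j\<in>{2..L}. i \<noteq> j \<longrightarrow> block i \<inter> block j = {}"
    proof (intro ballI impI)
      fix i j assume i: "i \<in> {2..L}" and j: "j \<in> {2..L}" and ij: "i \<noteq> j"
      have "x \<in> block i \<Longrightarrow> level x = i" for x using block_iff[of i x] i by auto
      moreover have "x \<in> block j \<Longrightarrow> level x = j" for x using block_iff[of j x] j by auto
      ultimately show "block i \<inter> block j = {}" using ij by auto
    qed
  qed (auto simp: finite_block)
  also have "\<dots> = (\<Sum>k\<in>{2..L}. m - 1)" by (rule sum.cong) (auto simp: card_block)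
  also have "\<dots> = (L-1)*(m-1)" by simp
  finally show ?thesis .
qed

lemma card_parent_maps: "card parent_maps = m ^ ((L-1)*(m-1))"
proof -
  have finDD: "finite free_elems" unfolding free_elems_def using finite_block by auto
  have "card parent_maps = (\<Prod>x\<in>free_elems. card (level_set (level x - 1)))"
    unfolding parent_maps_def by (simp add: card_PiE finDD)
  also have "\<dots> = (\<Prod>x\<in>free_elems. m)"
  proof (rule prod.cong)
    fix x assume "x \<in> free_elems"
    then have "2 \<le> level x" "level x \<le> L" using free_elems_level by auto
    then show "card (level_set (level x - 1)) = m" using card_level_set by simp
  qed simp
  also have "\<dots> = m ^ card free_elems" by simp
  finally show ?thesis using card_free_elems by simp
qed

definition level_perms :: "(nat \<Rightarrow> nat) set" where
  "level_perms = {f \<in> {..<nelems} \<rightarrow>\<^sub>E {..<nelems}. bij_betw f {..<nelems} {..<nelems} \<and>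
      (\<forall>x<nelems. level (f x) = level x) \<and> (\<forall>k\<in>{2..L}. f (spine k) = spine k)}"

lemma level_perms_inj: "f \<in> level_perms \<Longrightarrow> x < nelems \<Longrightarrow> y < nelems \<Longrightarrow> f x = f y \<Longrightarrow> x = y"
  unfolding level_perms_def bij_betw_def inj_on_def by auto

lemma level_perms_fix: "f \<in> level_perms \<Longrightarrow> x < nelems \<Longrightarrow> \<not> (\<exists>k\<in>{1..L}. x \<in> block k) \<Longrightarrow> f x = x"
proof -
  assume f: "f \<in> level_perms" and x: "x < nelems" and nA: "\<not> (\<exists>k\<in>{1..L}. x \<in> block k)"
  have fl: "level (f x) = level x" using f x unfolding level_perms_def by auto
  consider "x = 0" | "L*m < x" | "\<exists>k\<in>{2..L}. x = spine k" using elem_cases[OF x] nA by blast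
  then show ?thesis
  proof cases
    case 1
    then have "level (f x) = 0" using fl by (simp add: level_def)
    then show ?thesis using 1 level_eq_0_iff by simp
  next
    case 2
    then have "L < level x" using L1 by (simp add: level_def)
    then have a: "level x = x - L*m + L" and b: "L*m < f x \<and> level (f x) = f x - L*m + L"
      using level_high fl by auto
    then have "x - L*m = f x - L*m" using fl by simp
    then show ?thesis using eq_diff_iff[of "L*m" x "f x"] b 2 by simp
  next
    case 3
    then show ?thesis using f unfolding level_perms_def by auto
  qed
qed

lemma level_perms_block: "f \<in> level_perms \<Longrightarrow> k \<in> {1..L} \<Longrightarrow> x \<in> block k \<Longrightarrow> f x \<in> block k"
proof -
  assume f: "f \<in> level_perms" and k: "k \<in> {1..L}" and x: "x \<in> block k"
  have k1: "1 \<le> k" "k \<le> L" using k by auto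
  have xc: "x < nelems" "level x = k" "k = 1 \<or> x \<noteq> spine k" using block_iff[OF k1] x by auto
  have "f x < nelems" "level (f x) = k" using f xc unfolding level_perms_def by auto
  moreover have "k = 1 \<or> f x \<noteq> spine k"
  proof (cases "k = 1")
    case False
    then have "f (spine k) = spine k" "spine k < nelems"
      using f k1 spine_less L_less_height unfolding level_perms_def by auto
    then show ?thesis using level_perms_inj[OF f xc(1)] xc(3) False by metis
  qed simp
  ultimately show ?thesis using block_iff[OF k1] by simp
qed

definition block_parts :: "(nat \<Rightarrow> nat) \<Rightarrow> nat \<Rightarrow> nat \<Rightarrow> nat" where
  "block_parts f = (\<lambda>k\<in>{1..L}. (\<lambda>x. if x \<in> block k then f x else x))"

lemma block_parts_in: "f \<in> level_perms \<Longrightarrow> block_parts f \<in> Pi\<^sub>E {1..L} (\<lambda>k. {g. g permutes block k})"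
proof -
  assume f: "f \<in> level_perms"
  have "(\<lambda>x. if x \<in> block k then f x else x) permutes block k" if k: "k \<in> {1..L}" for k
  proof (rule bij_imp_permutes)
    let ?g = "\<lambda>x. if x \<in> block k then f x else x"
    have sub: "block k \<subseteq> {..<nelems}" using block_iff k by auto
    have inj: "inj_on ?g (block k)" unfolding inj_on_def using level_perms_inj[OF f] sub by auto
    have im: "?g ` block k \<subseteq> block k" using level_perms_block[OF f k] by auto
    have "?g ` block k = block k" using endo_inj_surj[OF finite_block im inj] .
    then show "bij_betw ?g (block k) (block k)" using inj unfolding bij_betw_def by simp
  qed simp
  then show ?thesis unfolding block_parts_def by auto
qed

lemma inj_on_block_parts: "inj_on block_parts level_perms"
proof (rule inj_onI)
  fix f g assume f: "f \<in> level_perms" and g: "g \<in> level_perms"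
    and e: "block_parts f = block_parts g"
  show "f = g"
  proof (rule extensionalityI)
    show "f \<in> extensional {..<nelems}" "g \<in> extensional {..<nelems}"
      using f g unfolding level_perms_def by (auto simp: PiE_iff)
    fix x assume "x \<in> {..<nelems}"
    then have x: "x < nelems" by simp
    show "f x = g x"
    proof (cases "\<exists>k\<in>{1..L}. x \<in> block k")
      case True
      then obtain k where k: "k \<in> {1..L}" "x \<in> block k" by blast
      have "block_parts f k x = block_parts g k x" using e by simp
      then show ?thesis using k unfolding block_parts_def by simp
    next
      case False
      then show ?thesis using level_perms_fix[OF f x] level_perms_fix[OF g x] by simp
    qed
  qed
qed

lemma card_level_perms: "card level_perms \<le> fact m * fact (m-1) ^ (L-1)"
proof -
  have fin: "finite (Pi\<^sub>E {1..L} (\<lambda>k. {g. g permutes block k}))"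
    by (rule finite_PiE) (auto intro: finite_permutations finite_block)
  have "card level_perms \<le> card (Pi\<^sub>E {1..L} (\<lambda>k. {g. g permutes block k}))"
    using card_inj_on_le[OF inj_on_block_parts _ fin] block_parts_in by auto
  also have "\<dots> = (\<Prod>k\<in>{1..L}. card {g. g permutes block k})" by (simp add: card_PiE)
  also have "\<dots> = (\<Prod>k\<in>{1..L}. fact (if k = 1 then m else m - 1))"
    by (rule prod.cong) (auto simp: card_permutations finite_block card_block simp del: of_nat_fact)
  also have "{1..L} = insert 1 {2..L}" using L1 by auto
  also have "(\<Prod>k\<in>insert 1 {2..L}. fact (if k = 1 then m else m - 1)) =
      fact m * (\<Prod>k\<in>{2..L}. (fact (m - 1) :: nat))"
    by (subst prod.insert) (auto intro!: prod.cong)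
  also have "\<dots> = fact m * fact (m-1) ^ (L-1)" by simp
  finally show ?thesis .
qed

lemma tree_order_subset: "tree_order p \<subseteq> {..<nelems} \<times> {..<nelems}"
  unfolding tree_order_def by auto

end

locale spine_tree_lattice = spine_tree +
  fixes p :: "nat \<Rightarrow> nat"
  assumes pP: "p \<in> parent_maps"
begin

abbreviation "R \<equiv> tree_order p"

lemma parent_less: "x < nelems \<Longrightarrow> parent p x < nelems \<and> level (parent p x) = level x - 1"
proof -
  assume x: "x < nelems"
  show ?thesis
  proof (cases "x \<in> free_elems")
    case True
    then have "p x \<in> level_set (level x - 1)" using pP unfolding parent_maps_def by auto
    then show ?thesis using True unfolding parent_def level_set_def by auto
  next
    case False
    have "level x - 1 \<le> height" using level_le_height[OF x] by simp
    then show ?thesis using False spine_less level_spine unfolding parent_def by auto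
  qed
qed

lemma on_spine_parent: "x < nelems \<Longrightarrow> on_spine x \<Longrightarrow> on_spine (parent p x)"
  using free_elems_not_on_spine on_spine_spine unfolding parent_def by auto

lemma funpow_parent: "y < nelems \<Longrightarrow>
    (parent p ^^ k) y < nelems \<and> level ((parent p ^^ k) y) = level y - k"
  by (induction k) (auto simp: parent_less)

lemma on_spine_funpow_parent: "y < nelems \<Longrightarrow> on_spine y \<Longrightarrow> on_spine ((parent p ^^ k) y)"
  by (induction k) (auto simp: on_spine_parent funpow_parent)

lemma ancestor_less: "y < nelems \<Longrightarrow> ancestor p y j < nelems"
  unfolding ancestor_def using funpow_parent by auto

lemma level_ancestor: "y < nelems \<Longrightarrow> j \<le> level y \<Longrightarrow> level (ancestor p y j) = j"
  unfolding ancestor_def using funpow_parent by auto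

lemma ancestor_level: "ancestor p y (level y) = y"
  unfolding ancestor_def by simp

lemma ancestor_ancestor: "y < nelems \<Longrightarrow> i \<le> j \<Longrightarrow> j \<le> level y \<Longrightarrow>
    ancestor p (ancestor p y j) i = ancestor p y i"
proof -
  assume y: "y < nelems" and ij: "i \<le> j" and j: "j \<le> level y"
  have l: "level (ancestor p y j) = j" using level_ancestor y j by simp
  have "ancestor p (ancestor p y j) i = (parent p ^^ (level (ancestor p y j) - i)) (ancestor p y j)"
    by (rule ancestor_def)
  also have "\<dots> = (parent p ^^ (j - i)) ((parent p ^^ (level y - j)) y)"
    using l by (simp add: ancestor_def)
  also have "\<dots> = (parent p ^^ ((j - i) + (level y - j))) y" by (simp add: funpow_add)
  also have "(j - i) + (level y - j) = level y - i" using ij j by simp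
  finally show ?thesis unfolding ancestor_def .
qed

lemma on_spine_ancestor_mono: "y < nelems \<Longrightarrow> i \<le> j \<Longrightarrow> j \<le> level y \<Longrightarrow> on_spine (ancestor p y j) \<Longrightarrow>
    on_spine (ancestor p y i)"
proof -
  assume y: "y < nelems" and ij: "i \<le> j" and j: "j \<le> level y" and s: "on_spine (ancestor p y j)"
  have "ancestor p y i = ancestor p (ancestor p y j) i" using ancestor_ancestor y ij j by simp
  also have "\<dots> = (parent p ^^ (level (ancestor p y j) - i)) (ancestor p y j)" by (rule ancestor_def)
  also have "\<dots> = (parent p ^^ (j - i)) (ancestor p y j)" using level_ancestor[OF y j] by simp
  finally show ?thesis using on_spine_funpow_parent[OF ancestor_less[OF y] s] by simp
qed

lemma ancestor_0: "y < nelems \<Longrightarrow> ancestor p y 0 = 0"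
  using level_ancestor[of y 0] level_eq_0_iff by simp

lemma ancestor_parent: "y < nelems \<Longrightarrow> 1 \<le> level y \<Longrightarrow> ancestor p y (level y - 1) = parent p y"
  unfolding ancestor_def by (simp add: numeral_2_eq_2)

lemma tree_order_iff: "(x, y) \<in> R \<longleftrightarrow> x < nelems \<and> y < nelems \<and> (x = y \<or> (level x < level y \<and>
      (ancestor p y (level x) = x \<or> on_spine (ancestor p y (level x + 1)))))"
  unfolding tree_order_def by simp

lemma tree_order_level_less: "(x, y) \<in> R \<Longrightarrow> x \<noteq> y \<Longrightarrow> level x < level y"
  unfolding tree_order_iff by auto

lemma tree_order_refl: "x < nelems \<Longrightarrow> (x, x) \<in> R"
  unfolding tree_order_iff by auto

lemma tree_order_antisym: "(x, y) \<in> R \<Longrightarrow> (y, x) \<in> R \<Longrightarrow> x = y"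
  by (metis tree_order_level_less less_asym)

lemma below_ancestor_iff:
  assumes u: "u < nelems" and lx: "level x < j" and j: "j \<le> level u"
  shows "(x, ancestor p u j) \<in> R \<longleftrightarrow> (x, u) \<in> R"
proof -
  have a: "ancestor p u j < nelems" "level (ancestor p u j) = j"
    using ancestor_less level_ancestor u j by auto
  have same: "ancestor p (ancestor p u j) i = ancestor p u i" if "i \<le> j" for i
    using ancestor_ancestor[OF u that j] .
  have "x \<noteq> ancestor p u j" "x \<noteq> u" using a lx j by auto
  then show ?thesis
    using a lx j u same[of "level x"] same[of "level x + 1"] unfolding tree_order_iff by auto
qed

lemma tree_order_trans:
  assumes xy: "(x, y) \<in> R" and yz: "(y, z) \<in> R"
  shows "(x, z) \<in> R"
proof (cases "x = y \<or> y = z")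
  case True
  then show ?thesis using xy yz by auto
next
  case False
  then have lxy: "level x < level y" and lyz: "level y < level z"
    using tree_order_level_less xy yz by auto
  have z: "z < nelems" using yz unfolding tree_order_iff by auto
  from yz False have "ancestor p z (level y) = y \<or> on_spine (ancestor p z (level y + 1))"
    unfolding tree_order_iff by auto
  then show ?thesis
  proof
    assume "ancestor p z (level y) = y"
    then show ?thesis using below_ancestor_iff[OF z lxy] lyz xy by simp
  next
    assume "on_spine (ancestor p z (level y + 1))"
    then have "on_spine (ancestor p z (level x + 1))"
      using on_spine_ancestor_mono[OF z, of "level x + 1" "level y + 1"] lxy lyz by simp
    then show ?thesis using xy z lxy lyz unfolding tree_order_iff by auto
  qed
qed

lemma antisym_tree_order: "antisym R"
  unfolding antisym_def using tree_order_antisym by blast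

lemma spine_below: "u < nelems \<Longrightarrow> k \<le> level u \<Longrightarrow> on_spine (ancestor p u k) \<Longrightarrow> (spine k, u) \<in> R"
proof -
  assume u: "u < nelems" and k: "k \<le> level u" and s: "on_spine (ancestor p u k)"
  have e: "spine k = ancestor p u k"
    using spine_level[OF ancestor_less[OF u] s] level_ancestor[OF u k] by simp
  have kH: "k \<le> height" using k level_le_height[OF u] by simp
  show ?thesis
  proof (cases "k = level u")
    case True then show ?thesis using e ancestor_level tree_order_refl u by simp
  next
    case False
    have a1: "spine k < nelems" "level (spine k) = k" using spine_less level_spine kH by auto
    have "k < level u" using False k by simp
    then show ?thesis using e[symmetric] a1 u unfolding tree_order_iff by auto
  qed
qed

lemma below_spine: "x < nelems \<Longrightarrow> level x < k \<Longrightarrow> k \<le> height \<Longrightarrow> (x, spine k) \<in> R"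
proof -
  assume x: "x < nelems" and lk: "level x < k" and kH: "k \<le> height"
  have s: "spine k < nelems" and l: "level (spine k) = k" using spine_less level_spine kH by auto
  have "on_spine (ancestor p (spine k) (level x + 1))"
    unfolding ancestor_def using on_spine_funpow_parent[OF s on_spine_spine] by simp
  then show ?thesis using x s l lk unfolding tree_order_iff by auto
qed

lemma below_top: "x < nelems \<Longrightarrow> (x, nelems - 1) \<in> R"
proof (cases "x = nelems - 1")
  case True
  assume "x < nelems" then show ?thesis using True tree_order_refl by simp
next
  case False
  assume x: "x < nelems"
  then have "level x < height" using level_le_height level_eq_height_iff False by fastforce
  then show ?thesis using below_spine[OF x, of height] spine_height by simp
qed

lemma bot_below: "y < nelems \<Longrightarrow> (0, y) \<in> R"
proof (cases "y = 0")
  case True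
  assume "y < nelems" then show ?thesis using True tree_order_refl by simp
next
  case False
  assume y: "y < nelems"
  have l0: "level 0 = 0" by (simp add: level_def)
  have "0 < level y" using level_eq_0_iff[of y] False by simp
  then show ?thesis using l0 ancestor_0[OF y] y unfolding tree_order_iff by (auto simp: nelems_def)
qed

lemma below_bot: "(x, 0) \<in> R \<Longrightarrow> x = 0"
  by (metis tree_order_level_less level_eq_0_iff not_less0)

lemma parent_below: "x < nelems \<Longrightarrow> x \<noteq> 0 \<Longrightarrow> (parent p x, x) \<in> R"
proof -
  assume x: "x < nelems" and x0: "x \<noteq> 0"
  have l: "1 \<le> level x" using level_eq_0_iff[of x] x0 by simp
  show ?thesis using parent_less[OF x] ancestor_parent[OF x l] x l unfolding tree_order_iff by auto
qed

lemma below_parent: "(z, a) \<in> R \<Longrightarrow> level z + 1 < level a \<Longrightarrow> (z, parent p a) \<in> R"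
proof -
  assume za: "(z, a) \<in> R" and lz: "level z + 1 < level a"
  have a: "a < nelems" using za unfolding tree_order_iff by auto
  have "parent p a = ancestor p a (level a - 1)" using ancestor_parent[OF a] lz by simp
  then show ?thesis using below_ancestor_iff[OF a, of z "level a - 1"] za lz by simp
qed

lemma level_less_height_if_not_below: "x < nelems \<Longrightarrow> y < nelems \<Longrightarrow> (y, x) \<notin> R \<Longrightarrow> level x < height"
proof -
  assume x: "x < nelems" and y: "y < nelems" and n: "(y, x) \<notin> R"
  have "x \<noteq> nelems - 1" using below_top[OF y] n by auto
  then show ?thesis using level_le_height[OF x] level_eq_height_iff[OF x] by fastforce
qed

text \<open>
  An upper bound \<open>u\<close> of incomparable \<open>x\<close> and \<open>y\<close> with \<open>level y \<le> level x\<close> cannot have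
  \<open>x\<close> as an ancestor, since \<open>y \<le> u\<close> would then give \<open>y \<le> x\<close>. So the ancestor of \<open>u\<close> one
  level above \<open>x\<close> is on the spine, and \<open>u\<close> lies above the spine element of that level.
\<close>

lemma is_lub_incomparable:
  assumes x: "x < nelems" and y: "y < nelems" and nxy: "(x, y) \<notin> R" and nyx: "(y, x) \<notin> R"
    and lyx: "level y \<le> level x"
  shows "is_lub nelems R x y (spine (level x + 1))"
proof -
  have lH: "level x < height" using level_less_height_if_not_below x y nyx by simp
  have least: "(spine (level x + 1), u) \<in> R"
    if u: "u < nelems" and xu: "(x, u) \<in> R" and yu: "(y, u) \<in> R" for u
  proof -
    have "x \<noteq> u" "y \<noteq> u" using xu yu nxy nyx by auto
    then have lxu: "level x < level u" using tree_order_level_less xu by simp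
    have "on_spine (ancestor p u (level x + 1))"
    proof (cases "ancestor p u (level x) = x")
      case False
      then show ?thesis using xu \<open>x \<noteq> u\<close> unfolding tree_order_iff by auto
    next
      case anc: True
      show ?thesis
      proof (cases "level y = level x")
        case True
        have "ancestor p u (level y) \<noteq> y" using anc True nxy tree_order_refl x by auto
        then show ?thesis using yu \<open>y \<noteq> u\<close> True unfolding tree_order_iff by auto
      next
        case False
        then have "level y < level x" using lyx by simp
        then have "(y, x) \<in> R" using below_ancestor_iff[OF u, of y "level x"] anc yu lxu by simp
        then show ?thesis using nyx by simp
      qed
    qed
    then show ?thesis using spine_below[OF u, of "level x + 1"] lxu by simp
  qed
  show ?thesis
    unfolding is_lub_def using spine_less lH below_spine x y lyx least by auto
qed

lemma ex_is_lub: "x < nelems \<Longrightarrow> y < nelems \<Longrightarrow> \<exists>j. is_lub nelems R x y j"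
proof -
  assume x: "x < nelems" and y: "y < nelems"
  consider "(x, y) \<in> R" | "(y, x) \<in> R" | "(x, y) \<notin> R" "(y, x) \<notin> R" by blast
  then show ?thesis
  proof cases
    case 1
    then have "is_lub nelems R x y y" unfolding is_lub_def using y tree_order_refl by auto
    then show ?thesis by blast
  next
    case 2
    then have "is_lub nelems R x y x" unfolding is_lub_def using x tree_order_refl by auto
    then show ?thesis by blast
  next
    case 3
    then show ?thesis
      using is_lub_incomparable x y is_lub_commute nat_le_linear by metis
  qed
qed

lemma lattice_order_tree_order: "lattice_order nelems R"
proof -
  have t: "trans R" unfolding trans_def using tree_order_trans by blast
  have po: "partial_order_on {..<nelems} R"
    unfolding partial_order_on_def preorder_on_def refl_on_def
    using tree_order_refl t antisym_tree_order tree_order_subset by auto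
  have lubs: "\<forall>a<nelems. \<forall>b<nelems. \<exists>j. is_lub nelems R a b j" using ex_is_lub by blast
  then have glbs: "\<forall>a<nelems. \<forall>b<nelems. \<exists>g. is_glb nelems R a b g"
    using ex_is_glb_if_bot[of 0 nelems R] t bot_below tree_order_refl by (auto simp: nelems_def)
  show ?thesis unfolding lattice_order_def
    using po lubs glbs tree_order_subset by (auto simp: nelems_def)
qed

lemma covers_if_level_succ: "(x, y) \<in> R \<Longrightarrow> level y = level x + 1 \<Longrightarrow> covers nelems R x y"
  unfolding covers_def using tree_order_level_less tree_order_iff
  by (metis Suc_eq_plus1 not_less_eq n_not_Suc_n)

lemma covers_level: "covers nelems R x y \<Longrightarrow> level y = level x + 1"
proof (rule ccontr)
  assume c: "covers nelems R x y" and "level y \<noteq> level x + 1"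
  have y: "y < nelems" and xy: "(x, y) \<in> R" and between:
    "\<And>z. z < nelems \<Longrightarrow> (x, z) \<in> R \<Longrightarrow> (z, y) \<in> R \<Longrightarrow> z \<noteq> x \<Longrightarrow> z \<noteq> y \<Longrightarrow> False"
    using c unfolding covers_def by blast+
  then have "level x < level y" using c tree_order_level_less unfolding covers_def by blast
  then have l2: "level x + 1 < level y" using \<open>level y \<noteq> level x + 1\<close> by simp
  have y0: "y \<noteq> 0" using l2 level_eq_0_iff[of y] by auto
  show False
    using between[of "parent p y"] parent_less[OF y] below_parent[OF xy l2] parent_below[OF y y0] l2
    by fastforce
qed

lemma covers_parent: "x < nelems \<Longrightarrow> x \<noteq> 0 \<Longrightarrow> covers nelems R (parent p x) x"
  using covers_if_level_succ parent_below parent_less level_eq_0_iff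
  by (metis Suc_diff_1 Suc_eq_plus1 not_gr_zero)

text \<open>
  If \<open>a\<close> covers \<open>a \<sqinter> b\<close> and \<open>a, b\<close> are incomparable, then \<open>level a \<le> level b\<close> and the join is
  the spine element one level above \<open>b\<close>, which covers \<open>b\<close>.
\<close>

lemma semimodular_tree_order: "semimodular_lattice nelems R"
  unfolding semimodular_lattice_def
proof (intro conjI lattice_order_tree_order allI impI)
  fix a b g j
  assume a: "a < nelems" and b: "b < nelems" and g: "is_glb nelems R a b g"
    and j: "is_lub nelems R a b j" and c: "covers nelems R g a"
  have ga: "(g, a) \<in> R" and gb: "(g, b) \<in> R"
    and glb: "\<And>u. u < nelems \<Longrightarrow> (u, a) \<in> R \<Longrightarrow> (u, b) \<in> R \<Longrightarrow> (u, g) \<in> R"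
    using g unfolding is_glb_def by auto
  have "(a, b) \<notin> R"
    using glb[OF a tree_order_refl[OF a]] ga c tree_order_antisym unfolding covers_def by blast
  show "covers nelems R b j"
  proof (cases "(b, a) \<in> R")
    case True
    then have "b = g" using glb[OF b _ tree_order_refl[OF b]] gb tree_order_antisym by blast
    moreover have "is_lub nelems R a b a" unfolding is_lub_def using a True tree_order_refl by auto
    ultimately show ?thesis using is_lub_unique[OF antisym_tree_order j] c by blast
  next
    case False
    have "g \<noteq> b" using ga False by auto
    then have "level a \<le> level b"
      using covers_level[OF c] tree_order_level_less[OF gb] by simp
    then have "is_lub nelems R b a (spine (level b + 1))"
      using is_lub_incomparable b a \<open>(a, b) \<notin> R\<close> False by simp
    then have "j = spine (level b + 1)"
      using is_lub_unique[OF antisym_tree_order] j is_lub_commute by blast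
    moreover have "level b < height" using level_less_height_if_not_below b a \<open>(a, b) \<notin> R\<close> by simp
    ultimately show ?thesis
      using covers_if_level_succ below_spine[OF b] level_spine by simp
  qed
qed

lemma parent_unique: "y < nelems \<Longrightarrow> \<not> on_spine y \<Longrightarrow> (z, y) \<in> R \<Longrightarrow> level z + 1 = level y \<Longrightarrow>
    z = parent p y"
proof -
  assume y: "y < nelems" and ns: "\<not> on_spine y" and zy: "(z, y) \<in> R" and l: "level z + 1 = level y"
  have "z \<noteq> y" using l by auto
  then have "ancestor p y (level z) = z \<or> on_spine (ancestor p y (level z + 1))"
    using zy unfolding tree_order_iff by auto
  then have "ancestor p y (level z) = z" using ns l ancestor_level by simp
  moreover have "ancestor p y (level z) = parent p y"
    using ancestor_parent[OF y] l by (metis add_diff_cancel_right' le_add2)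
  ultimately show ?thesis by simp
qed

end

locale spine_tree_iso = spine_tree +
  fixes p q f :: "nat \<Rightarrow> nat"
  assumes p: "p \<in> parent_maps" and q: "q \<in> parent_maps"
    and iso: "order_iso_by nelems f (tree_order p) (tree_order q)"
begin

sublocale P: spine_tree_lattice m L t p
  by unfold_locales (rule p)

sublocale Q: spine_tree_lattice m L t q
  by unfold_locales (rule q)

lemma iso_iff: "x < nelems \<Longrightarrow> y < nelems \<Longrightarrow> (x, y) \<in> tree_order p \<longleftrightarrow> (f x, f y) \<in> tree_order q"
  using iso unfolding order_iso_by_def by blast

lemma iso_0: "f 0 = 0"
proof -
  have n: "0 < nelems" by (simp add: nelems_def)
  obtain w where w: "w < nelems" "f w = 0" using order_iso_by_surj[OF iso n] by blast
  then have "(f 0, 0) \<in> tree_order q" using iso_iff[OF n w(1)] P.bot_below by simp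
  then show ?thesis using Q.below_bot by simp
qed

text \<open>Levels are preserved because they are the lengths of the covering chains from the bottom.\<close>

lemma level_iso: "x < nelems \<Longrightarrow> level (f x) = level x"
proof (induction "level x" arbitrary: x)
  case 0
  then show ?case using iso_0 level_eq_0_iff by simp
next
  case (Suc k)
  then have x0: "x \<noteq> 0" using level_eq_0_iff[of x] by (metis nat.distinct(1))
  have "covers nelems (tree_order q) (f (parent p x)) (f x)"
    using order_iso_by_covers[OF iso P.covers_parent[OF Suc.prems x0]] .
  then have "level (f x) = level (f (parent p x)) + 1" using Q.covers_level by simp
  moreover have "level (f (parent p x)) = k"
    using Suc.hyps Suc.prems P.parent_less[OF Suc.prems] by (metis diff_Suc_1)
  ultimately show ?case using Suc.hyps by simp
qed

text \<open>
  The image of the spine element of level \<open>k \<ge> 2\<close> lies above every element of level \<open>k - 1\<close>.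
  Were it off the spine, both the spine element of level \<open>k - 1\<close> and its successor would be
  its parent.
\<close>

lemma spine_iso:
  assumes k2: "2 \<le> k" and kL: "k \<le> L"
  shows "f (spine k) = spine k"
proof -
  have kH: "k \<le> height" using kL L_less_height by simp
  have s: "spine k < nelems" "level (spine k) = k" using spine_less level_spine kH by auto
  let ?y = "f (spine k)"
  have y: "?y < nelems" using order_iso_by_less[OF iso s(1)] .
  have ly: "level ?y = k" using level_iso s by simp
  have below: "(z, ?y) \<in> tree_order q" if z: "z < nelems" "level z = k - 1" for z
  proof -
    obtain w where w: "w < nelems" "f w = z" using order_iso_by_surj[OF iso z(1)] by blast
    have "level w = k - 1" using level_iso[OF w(1)] w z by simp
    then have "(w, spine k) \<in> tree_order p" using P.below_spine[OF w(1), of k] kH k2 by simp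
    then show ?thesis using iso_iff[OF w(1) s(1)] w by simp
  qed
  have "on_spine ?y"
  proof (rule ccontr)
    assume ns: "\<not> on_spine ?y"
    have k1: "1 \<le> k - 1" "k - 1 \<le> L" using k2 kL by auto
    have z1: "spine (k-1) < nelems" "level (spine (k-1)) = k - 1"
      using spine_less level_spine kH by auto
    have "(k-1)*m = (k-2)*m + m"
      using k2 by (metis Suc_diff_Suc Suc_1 less_le_trans lessI mult_Suc add.commute)
    then have "spine (k-1) + 1 \<in> block (k-1)"
      using spine_low[OF k1] k2 m2 unfolding block_def by (auto simp: numeral_2_eq_2)
    then have z2: "spine (k-1) + 1 < nelems" "level (spine (k-1) + 1) = k - 1"
      using block_iff[OF k1] by auto
    have "spine (k-1) = parent q ?y" using Q.parent_unique[OF y ns below[OF z1]] z1 ly k2 by simp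
    moreover have "spine (k-1) + 1 = parent q ?y"
      using Q.parent_unique[OF y ns below[OF z2]] z2 ly k2 by simp
    ultimately show False by simp
  qed
  then show ?thesis using spine_level[OF y] ly by simp
qed

lemma restrict_iso_in_level_perms: "restrict f {..<nelems} \<in> level_perms"
proof -
  have "restrict f {..<nelems} \<in> {..<nelems} \<rightarrow>\<^sub>E {..<nelems}"
    using order_iso_by_less[OF iso] by auto
  then show ?thesis
    using order_iso_by_restrict[OF iso] level_iso spine_iso spine_less L_less_height
    unfolding level_perms_def order_iso_by_def by auto
qed

end

context spine_tree
begin

lemma inj_on_tree_order: "inj_on tree_order parent_maps"
proof (rule inj_onI)
  fix p q assume pP: "p \<in> parent_maps" and qP: "q \<in> parent_maps"
    and e: "tree_order p = tree_order q"
  interpret P: spine_tree_lattice m L t p by unfold_locales (rule pP)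
  interpret Q: spine_tree_lattice m L t q by unfold_locales (rule qP)
  show "p = q"
  proof (rule PiE_ext[OF pP[unfolded parent_maps_def] qP[unfolded parent_maps_def]])
    fix x assume x: "x \<in> free_elems"
    have xl: "x < nelems" using free_elems_less x by simp
    have lx: "2 \<le> level x" using free_elems_level x by simp
    have x0: "x \<noteq> 0" using lx level_eq_0_iff[of x] by auto
    have "(parent p x, x) \<in> tree_order q" using P.parent_below[OF xl x0] e by simp
    moreover have "level (parent p x) + 1 = level x" using P.parent_less[OF xl] lx by simp
    ultimately have "parent p x = parent q x"
      using Q.parent_unique[OF xl free_elems_not_on_spine[OF x]] by simp
    then show "p x = q x" using x unfolding parent_def by simp
  qed
qed

text \<open>
  Fixing one member \<open>p\<^sub>0\<close> of an isomorphism class, every member \<open>p\<close> is determined by an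
  isomorphism from \<open>tree_order p\<^sub>0\<close> to \<open>tree_order p\<close>, and these lie in \<open>level_perms\<close>.
\<close>

lemma card_iso_class_le:
  assumes p0: "p0 \<in> parent_maps"
  shows "card {p \<in> parent_maps. order_iso nelems (tree_order p0) (tree_order p)} \<le> card level_perms"
proof -
  let ?I = "{p \<in> parent_maps. order_iso nelems (tree_order p0) (tree_order p)}"
  define h where "h p = (SOME f. order_iso_by nelems f (tree_order p0) (tree_order p))" for p
  define g where "g p = restrict (h p) {..<nelems}" for p
  have g: "order_iso_by nelems (g p) (tree_order p0) (tree_order p) \<and> g p \<in> level_perms"
    if p: "p \<in> ?I" for p
  proof -
    have "\<exists>f. order_iso_by nelems f (tree_order p0) (tree_order p)"
      using p order_iso_iff_ex by blast
    then have "order_iso_by nelems (h p) (tree_order p0) (tree_order p)"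
      unfolding h_def by (rule someI_ex)
    then interpret spine_tree_iso m L t p0 p "h p"
      using p0 p by unfold_locales auto
    show ?thesis
      using order_iso_by_restrict[OF iso] restrict_iso_in_level_perms unfolding g_def by simp
  qed
  have image: "tree_order p = (\<lambda>(x, y). (g p x, g p y)) ` tree_order p0" if "p \<in> ?I" for p
    using order_iso_by_image g[OF that] tree_order_subset by blast
  have "inj_on g ?I"
  proof (rule inj_onI)
    fix p p' assume p: "p \<in> ?I" and p': "p' \<in> ?I" and "g p = g p'"
    then have "tree_order p = tree_order p'" using image[OF p] image[OF p'] by simp
    then show "p = p'" using inj_on_tree_order p p' by (auto dest: inj_onD)
  qed
  moreover have "g ` ?I \<subseteq> level_perms" using g by blast
  moreover have "finite level_perms"
    by (rule finite_subset[of _ "{..<nelems} \<rightarrow>\<^sub>E {..<nelems}"])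
      (auto simp: level_perms_def intro: finite_PiE)
  ultimately show ?thesis by (rule card_inj_on_le)
qed

lemma s_count_lower_bound: "m ^ ((L-1)*(m-1)) \<le> s_count nelems * (fact m * fact (m-1) ^ (L-1))"
proof -
  have "card parent_maps \<le> s_count nelems * card level_perms"
  proof (rule card_le_s_count_mult)
    show "finite parent_maps" unfolding parent_maps_def
      by (rule finite_PiE) (auto simp: free_elems_def finite_block level_set_def)
    show "tree_order p \<in> semimod_lattices nelems" if "p \<in> parent_maps" for p
    proof -
      interpret spine_tree_lattice m L t p by unfold_locales (rule that)
      show ?thesis unfolding semimod_lattices_def using semimodular_tree_order by simp
    qed
  qed (rule card_iso_class_le)
  then show ?thesis using card_parent_maps card_level_perms by (metis le_trans mult_le_mono2)
qed

end

lemma s_count_ge_power: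
  fixes m n :: nat
  assumes m: "2 \<le> m" and n: "m + 2 \<le> n"
  shows "(real m ^ (m - 1) / fact (m - 1)) ^ ((n - 2) div m - 1) \<le> real (s_count n) * fact m"
proof -
  define L where "L = (n - 2) div m"
  define t where "t = n - 1 - L * m"
  have L1: "1 \<le> L" unfolding L_def using m n by (simp add: Suc_le_eq div_greater_zero_iff)
  have "L * m \<le> n - 2" unfolding L_def by simp
  then have t1: "1 \<le> t" and n_eq: "n = 1 + L * m + t" unfolding t_def using n by auto
  interpret spine_tree m L t using m L1 t1 by unfold_locales
  define X :: real where "X = real m ^ (m - 1) / fact (m - 1)"
  define F :: real where "F = fact (m - 1) ^ (L - 1)"
  have "real m ^ ((L - 1) * (m - 1)) = X ^ (L - 1) * F"
    unfolding X_def F_def by (simp add: power_mult[symmetric] mult.commute power_divide)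
  moreover have
    "real (m ^ ((L - 1) * (m - 1))) \<le> real (s_count n * (fact m * fact (m - 1) ^ (L - 1)))"
    using s_count_lower_bound n_eq unfolding nelems_def by (simp only: of_nat_le_iff)
  then have "real m ^ ((L - 1) * (m - 1)) \<le> real (s_count n) * fact m * F"
    unfolding F_def by (simp add: mult.assoc)
  moreover have "0 < F" unfolding F_def by simp
  ultimately show ?thesis unfolding X_def L_def by simp
qed

lemma power_2508_le: "(2.5080::real) ^ 40 \<le> 40 ^ 39 / fact 39"
proof -
  have "(2508::nat)^40 * fact 39 \<le> 40^39 * 1000^40" by (simp add: fact_numeral)
  then have "real ((2508::nat)^40 * fact 39) \<le> real ((40::nat)^39 * 1000^40)"
    by (simp only: of_nat_le_iff)
  then have "(2508::real)^40 * fact 39 \<le> 40^39 * 1000^40" by simp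
  moreover have "(2.5080::real) ^ 40 = 2508^40 / 1000^40" by (simp add: power_divide)
  ultimately show ?thesis by (simp add: divide_le_eq le_divide_eq field_simps)
qed

theorem corollary2p5:
  shows "\<exists>b::real. b > 0 \<and> (\<exists>N. \<forall>n\<ge>N. b * (2.5080::real) ^ n \<le> real (s_count n))"
proof (intro exI conjI allI impI)
  define c :: real where "c = 2.5080"
  show "0 < 1 / (fact 40 * c ^ 81)" unfolding c_def by simp
  fix n :: nat assume n: "42 \<le> n"
  define L where "L = (n - 2) div 40"
  have "n \<le> 40 * (L - 1) + 81" unfolding L_def using n by linarith
  then have "c ^ n \<le> c ^ (40 * (L - 1) + 81)"
    by (rule power_increasing) (simp add: c_def)
  also have "\<dots> = (c ^ 40) ^ (L - 1) * c ^ 81" by (simp add: power_add power_mult)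
  also have "\<dots> \<le> (40 ^ 39 / fact 39) ^ (L - 1) * c ^ 81"
    using power_2508_le unfolding c_def by (intro mult_right_mono power_mono) auto
  also have "\<dots> \<le> real (s_count n) * fact 40 * c ^ 81"
    using s_count_ge_power[of 40 n] n unfolding L_def c_def by (intro mult_right_mono) auto
  finally show "1 / (fact 40 * c ^ 81) * c ^ n \<le> real (s_count n)"
    unfolding c_def by (simp add: field_simps)
qed

end
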